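(* Let $m\ge 1$ and let $(a_1,b_1),\dots,(a_m,b_m)$ be pairs of non-negative integers with $(a_k,b_k)\neq(1,0)$ for every $k$. For $n\ge 1$ let $\mathcal{A}_n$ be the rational hyperplane arrangement in $\mathbb{R}^n$ consisting of the hyperplanes $x_i=x_j$ for $1\le i<j\le n$ together with the hyperplanes $x_i=a_kx_j+b_k$ for all $1\le i\neq j\le n$ and $1\le k\le m$. For a prime $q$, let $G_q$ be the simple graph with vertex set $\mathbb{Z}/q\mathbb{Z}=\{0,1,\dots,q-1\}$ in which two distinct vertices $u,v$ are adjacent if and only if $u\equiv a_kv+b_k \pmod q$ or $v\equiv a_ku+b_k\pmod q$ for some $1\le k\le m$. Then for every sufficiently large prime $q$, the number of $n$-element independent sets of $G_q$ equals $\chi_{\mathcal{A}_n}(q)/n!$.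
   Context: For a finite arrangement $\mathcal{A}$ of affine hyperplanes in $\mathbb{R}^n$, the characteristic polynomial is $\chi_{\mathcal{A}}(t)=\sum_{x\in L(\mathcal{A})}\mu(\hat 0,x)\,t^{\dim x}$, where $L(\mathcal{A})$ is the poset of all nonempty intersections of subsets of hyperplanes of $\mathcal{A}$ (including $\hat 0=\mathbb{R}^n$) ordered by reverse inclusion and $\mu$ is its Möbius function; equivalently $\chi_{\mathcal{A}}(t)=\sum_{\mathcal{B}}(-1)^{\#\mathcal{B}}t^{n-\operatorname{rank}(\mathcal{B})}$, the sum over subsets $\mathcal{B}\subseteq\mathcal{A}$ whose hyperplanes have nonempty common intersection, where $\operatorname{rank}(\mathcal{B})$ is the dimension of the span of the normal vectors of the hyperplanes in $\mathcal{B}$. An independent set of a graph is a set of vertices no two of which are adjacent. *)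

theory Defs
  imports "HOL-Analysis.Analysis" "HOL-Number_Theory.Cong" "HOL-Computational_Algebra.Primes"
begin

definition is_normal :: "(real^'n) set \<Rightarrow> real^'n \<Rightarrow> bool" where
  "is_normal H w \<longleftrightarrow> w \<noteq> 0 \<and> (\<exists>c. H = {x. w \<bullet> x = c})"

definition arr_rank :: "(real^'n) set set \<Rightarrow> nat" where
  "arr_rank B = dim {w. \<exists>H\<in>B. is_normal H w}"

definition char_poly :: "(real^'n) set set \<Rightarrow> real \<Rightarrow> real" where
  "char_poly A t = (\<Sum>B\<in>{B. B \<subseteq> A \<and> \<Inter>B \<noteq> {}}.
      (-1) ^ card B * t ^ (CARD('n) - arr_rank B))"

definition arr :: "(nat \<times> nat) list \<Rightarrow> (real^'n) set set" where
  "arr ps = {{x. x $ i = x $ j} | i j. i \<noteq> j}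
          \<union> {{x. x $ i = real a * x $ j + real b} | i j a b. i \<noteq> j \<and> (a, b) \<in> set ps}"

definition adj :: "(nat \<times> nat) list \<Rightarrow> nat \<Rightarrow> nat \<Rightarrow> nat \<Rightarrow> bool" where
  "adj ps q u v \<longleftrightarrow> u \<noteq> v \<and>
     (\<exists>(a, b)\<in>set ps. [u = a * v + b] (mod q) \<or> [v = a * u + b] (mod q))"

definition indep_sets :: "(nat \<times> nat) list \<Rightarrow> nat \<Rightarrow> nat \<Rightarrow> nat set set" where
  "indep_sets ps q n = {S. S \<subseteq> {0..<q} \<and> card S = n \<and>
      (\<forall>u\<in>S. \<forall>v\<in>S. \<not> adj ps q u v)}"

end

theory Submission
  imports Defs "HOL-Combinatorics.Permutations"
begin

text \<open>
  The finite field method. For a prime \<open>q\<close>, a tuple \<open>y \<in> {0..q-1}^n\<close> satisfies none of the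
  defining equations of \<open>A_n\<close> modulo \<open>q\<close> iff its entries are distinct and pairwise non-adjacent
  in \<open>G_q\<close>, i.e. iff it enumerates an \<open>n\<close>-element independent set; so there are \<open>n!\<close> such
  tuples per independent set. By inclusion-exclusion their number is the sum over subsets \<open>B\<close>
  of \<open>A_n\<close> of \<open>(-1)^#B\<close> times the number of solutions modulo \<open>q\<close> of the integer linear system
  of \<open>B\<close>. Gaussian elimination over the integers commutes with reduction modulo any prime that
  divides no pivot, so for all large \<open>q\<close> that number is \<open>q^(n - rank B)\<close> if \<open>\<Inter>B \<noteq> {}\<close> and
  \<open>0\<close> otherwise: the terms of \<open>\<chi>(q)\<close>.
\<close>

lemma hyperplane_eq_imp_proportional:
  fixes u v :: "'a::real_inner"
  assumes "u \<noteq> 0" and H: "{x. u \<bullet> x = c} = {x. v \<bullet> x = d}"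
  obtains l where "v = l *\<^sub>R u" and "d = l * c"
proof -
  define l where "l = (v \<bullet> u) / (u \<bullet> u)"
  define x0 where "x0 = (c / (u \<bullet> u)) *\<^sub>R u"
  define z where "z = v - l *\<^sub>R u"
  have uu: "u \<bullet> u \<noteq> 0"
    using assms(1) by simp
  have x0: "u \<bullet> x0 = c"
    using uu by (simp add: x0_def)
  have uz: "u \<bullet> z = 0"
    using uu by (simp add: z_def l_def inner_diff_right inner_commute)
  have "x0 \<in> {x. u \<bullet> x = c}" and "x0 + z \<in> {x. u \<bullet> x = c}"
    using x0 uz by (simp_all add: inner_add_right)
  then have "v \<bullet> x0 = d" and "v \<bullet> (x0 + z) = d"
    unfolding H by simp_all
  then have "v \<bullet> z = 0"
    by (simp add: inner_add_right)
  then have "z \<bullet> z = 0"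
    using uz by (simp add: z_def inner_diff_left inner_commute)
  then have v: "v = l *\<^sub>R u"
    by (simp add: z_def)
  then have "d = l * c"
    using \<open>v \<bullet> x0 = d\<close> x0 by simp
  with v show thesis
    by (rule that)
qed

lemma card_Diff_UN_inclusion_exclusion:
  assumes "finite A" and "finite U"
  shows "int (card (U - (\<Union>a\<in>A. G a))) = (\<Sum>B\<in>Pow A. (-1) ^ card B * int (card (U \<inter> \<Inter>(G ` B))))"
proof -
  \<comment> \<open>counting inside \<open>U\<close> keeps the measure additive on infinite sets as well\<close>
  let ?f = "\<lambda>X. int (card (U \<inter> X))"
  have additive: "?f (S \<union> T) = ?f S + ?f T" if "disjnt S T" for S T
    using that assms(2) by (simp add: Int_Un_distrib card_Un_disjnt disjnt_def inf_assoc inf_left_commute)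
  have "int (card (U - (\<Union>a\<in>A. G a))) = ?f UNIV - ?f (\<Union>a\<in>A. G a)"
    using assms(2) by (simp add: card_Diff_subset_Int of_nat_diff card_mono)
  also have "?f (\<Union>a\<in>A. G a) = (\<Sum>B | B \<subseteq> A \<and> B \<noteq> {}. (-1) ^ (card B + 1) * ?f (\<Inter>(G ` B)))"
    using Incl_Excl_UN[of ?f A G] additive assms(1) by blast
  also have "?f UNIV - \<dots> = (\<Sum>B\<in>Pow A. (-1) ^ card B * ?f (\<Inter>(G ` B)))"
  proof -
    have "Pow A = insert {} {B. B \<subseteq> A \<and> B \<noteq> {}}"
      by auto
    then show ?thesis
      using assms(1) by (simp add: sum_negf[symmetric] diff_conv_add_uminus)
  qed
  finally show ?thesis .
qed

lemma card_bij_betw_UNIV: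
  fixes S :: "'b set"
  assumes "finite S" and "card S = CARD('n::finite)"
  shows "card {y :: 'n \<Rightarrow> 'b. bij_betw y UNIV S} = fact CARD('n)"
proof -
  obtain h :: "'n \<Rightarrow> 'b" where h: "bij_betw h UNIV S"
    using finite_same_card_bij[of "UNIV :: 'n set" S] assms by auto
  have "{y. bij_betw y UNIV S} = (\<lambda>\<sigma>. h \<circ> \<sigma>) ` {\<sigma>. \<sigma> permutes (UNIV :: 'n set)}"
  proof (intro set_eqI iffI)
    fix y :: "'n \<Rightarrow> 'b" assume "y \<in> {y. bij_betw y UNIV S}"
    then have "bij_betw (inv_into UNIV h \<circ> y) UNIV UNIV"
      using h by (auto intro: bij_betw_trans bij_betw_inv_into)
    then have "inv_into UNIV h \<circ> y permutes UNIV"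
      by (rule bij_imp_permutes) simp
    moreover have "y = h \<circ> (inv_into UNIV h \<circ> y)"
      using h \<open>y \<in> {y. bij_betw y UNIV S}\<close>
      by (auto simp: fun_eq_iff bij_betw_def intro!: f_inv_into_f[symmetric])
    ultimately show "y \<in> (\<lambda>\<sigma>. h \<circ> \<sigma>) ` {\<sigma>. \<sigma> permutes UNIV}"
      by blast
  qed (use h in \<open>auto intro: bij_betw_trans permutes_imp_bij\<close>)
  moreover have "inj_on (\<lambda>\<sigma>. h \<circ> \<sigma>) {\<sigma>. \<sigma> permutes (UNIV :: 'n set)}"
    using h by (auto simp: inj_on_def fun_eq_iff bij_betw_def dest: injD)
  ultimately show ?thesis
    by (simp add: card_image card_permutations)
qed

section \<open>Integer linear systems modulo large primes\<close>

definition int_form :: "('n::finite \<Rightarrow> int) \<Rightarrow> ('n \<Rightarrow> nat) \<Rightarrow> int" where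
  "int_form w y = (\<Sum>i\<in>UNIV. w i * int (y i))"

definition of_int_vec :: "('n::finite \<Rightarrow> int) \<Rightarrow> real^'n" where
  "of_int_vec w = (\<chi> i. of_int (w i))"

definition solves_real :: "('n::finite \<Rightarrow> int) \<times> int \<Rightarrow> real^'n \<Rightarrow> bool" where
  "solves_real e x \<longleftrightarrow> of_int_vec (fst e) \<bullet> x = of_int (snd e)"

definition solves_mod :: "nat \<Rightarrow> ('n::finite \<Rightarrow> int) \<times> int \<Rightarrow> ('n \<Rightarrow> nat) \<Rightarrow> bool" where
  "solves_mod p e y \<longleftrightarrow> [int_form (fst e) y = snd e] (mod int p)"

definition grid :: "nat \<Rightarrow> ('n::finite \<Rightarrow> nat) set" where
  "grid p = {y. \<forall>i. y i < p}"

text \<open>The coordinates in \<open>J\<close> are pinned to \<open>0\<close>; during elimination they are the variables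
  already eliminated.\<close>

definition real_solutions :: "'n::finite set \<Rightarrow> (('n \<Rightarrow> int) \<times> int) set \<Rightarrow> (real^'n) set" where
  "real_solutions J E = {x. (\<forall>j\<in>J. x $ j = 0) \<and> (\<forall>e\<in>E. solves_real e x)}"

definition mod_solutions ::
    "nat \<Rightarrow> 'n::finite set \<Rightarrow> (('n \<Rightarrow> int) \<times> int) set \<Rightarrow> ('n \<Rightarrow> nat) set" where
  "mod_solutions p J E = {y \<in> grid p. (\<forall>j\<in>J. y j = 0) \<and> (\<forall>e\<in>E. solves_mod p e y)}"

definition homogeneous :: "(('n \<Rightarrow> int) \<times> int) set \<Rightarrow> (('n \<Rightarrow> int) \<times> int) set" where
  "homogeneous E = (\<lambda>e. (fst e, 0)) ` E"

definition eliminate :: "'n \<Rightarrow> ('n \<Rightarrow> int) \<times> int \<Rightarrow> ('n \<Rightarrow> int) \<times> int \<Rightarrow> ('n \<Rightarrow> int) \<times> int" where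
  "eliminate i = (\<lambda>(w, c) (v, d). (\<lambda>k. w i * v k - v i * w k, w i * d - v i * c))"

lemma finite_grid: "finite (grid p :: ('n::finite \<Rightarrow> nat) set)"
proof -
  have "grid p = (\<Pi>\<^sub>E i\<in>(UNIV :: 'n set). {..<p})"
    by (auto simp: grid_def PiE_def Pi_def extensional_def)
  then show ?thesis
    by (simp add: finite_PiE)
qed

lemma int_form_upd: "int_form w (y(i := t)) = int_form w y + w i * (int t - int (y i))"
proof -
  have "int_form w (y(i := t)) =
      (\<Sum>k\<in>UNIV. w k * int (y k) + (if k = i then w i * (int t - int (y i)) else 0))"
    unfolding int_form_def by (intro sum.cong) (auto simp: algebra_simps)
  then show ?thesis
    by (simp add: sum.distrib int_form_def)
qed

lemma inner_of_int_vec_axis: "of_int_vec w \<bullet> axis i 1 = of_int (w i)"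
  by (simp add: inner_axis of_int_vec_def)

lemma int_form_eliminate:
  "int_form (fst (eliminate i e' e)) y = fst e' i * int_form (fst e) y - fst e i * int_form (fst e') y"
  by (cases e; cases e')
    (simp add: eliminate_def int_form_def sum_distrib_left sum_subtractf[symmetric] algebra_simps)

lemma of_int_vec_eliminate:
  "of_int_vec (fst (eliminate i e' e)) =
     of_int (fst e' i) *\<^sub>R of_int_vec (fst e) - of_int (fst e i) *\<^sub>R of_int_vec (fst e')"
  by (cases e; cases e') (simp add: eliminate_def of_int_vec_def vec_eq_iff)

lemma snd_eliminate: "snd (eliminate i e' e) = fst e' i * snd e - fst e i * snd e'"
  by (cases e; cases e') (simp add: eliminate_def)

lemma eliminate_pivot: "fst (eliminate i e' e) i = 0"
  by (cases e; cases e') (simp add: eliminate_def)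

lemma solves_real_eliminate_iff:
  assumes "fst e' i \<noteq> 0" and "solves_real e' x"
  shows "solves_real (eliminate i e' e) x \<longleftrightarrow> solves_real e x"
  using assms by (simp add: solves_real_def of_int_vec_eliminate snd_eliminate inner_diff_left)

lemma solves_mod_eliminate_iff:
  assumes "coprime (fst e' i) (int p)" and "solves_mod p e' y"
  shows "solves_mod p (eliminate i e' e) y \<longleftrightarrow> solves_mod p e y"
proof -
  have "[fst e i * int_form (fst e') y = fst e i * snd e'] (mod int p)"
    using assms(2) unfolding solves_mod_def by (rule cong_scalar_left)
  then have "solves_mod p (eliminate i e' e) y
      \<longleftrightarrow> [fst e' i * int_form (fst e) y = fst e' i * snd e] (mod int p)"
    unfolding solves_mod_def int_form_eliminate snd_eliminate
    by (metis cong_diff cong_refl diff_add_cancel cong_add)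
  also have "\<dots> \<longleftrightarrow> solves_mod p e y"
    using assms(1) unfolding solves_mod_def by (rule cong_mult_lcancel)
  finally show ?thesis .
qed

lemma solves_real_shift:
  assumes "fst e i = 0"
  shows "solves_real e (x + s *\<^sub>R axis i 1) \<longleftrightarrow> solves_real e x"
    and "solves_real e (x - s *\<^sub>R axis i 1) \<longleftrightarrow> solves_real e x"
  using assms by (simp_all add: solves_real_def inner_add_right inner_diff_right inner_of_int_vec_axis)

lemma drop_pivot_mem_real_solutions:
  assumes "fst e' i \<noteq> 0" and "x \<in> real_solutions J (insert e' E)"
  shows "x - x $ i *\<^sub>R axis i 1 \<in> real_solutions (insert i J) (eliminate i e' ` E)"
proof -
  have "solves_real (eliminate i e' e) (x - x $ i *\<^sub>R axis i 1)" if "e \<in> E" for e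
    using assms that
    by (simp add: real_solutions_def solves_real_shift eliminate_pivot solves_real_eliminate_iff)
  moreover have "(x - x $ i *\<^sub>R axis i 1) $ j = 0" if "j \<in> insert i J" for j
    using assms(2) that by (auto simp: real_solutions_def axis_def)
  ultimately show ?thesis
    unfolding real_solutions_def by blast
qed

lemma lift_pivot_mem_real_solutions:
  assumes "fst e' i \<noteq> 0" and "i \<notin> J" and z: "z \<in> real_solutions (insert i J) (eliminate i e' ` E)"
    and lift: "solves_real e' (z + s *\<^sub>R axis i 1)"
  shows "z + s *\<^sub>R axis i 1 \<in> real_solutions J (insert e' E)"
proof -
  have "solves_real e (z + s *\<^sub>R axis i 1)" if "e \<in> E" for e
  proof -
    have "solves_real (eliminate i e' e) (z + s *\<^sub>R axis i 1)"
      using z that by (simp add: real_solutions_def solves_real_shift eliminate_pivot)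
    then show ?thesis
      using assms(1) lift solves_real_eliminate_iff by blast
  qed
  then show ?thesis
    using assms(2) z lift by (auto simp: real_solutions_def axis_def)
qed

lemma bij_betw_real_solutions_eliminate:
  fixes E :: "(('n::finite \<Rightarrow> int) \<times> int) set"
  assumes pivot: "fst e' i \<noteq> 0" and "i \<notin> J"
  shows "bij_betw (\<lambda>x. x - x $ i *\<^sub>R axis i 1) (real_solutions J (insert e' E))
           (real_solutions (insert i J) (eliminate i e' ` E))"
proof -
  define drop where "drop x = x - x $ i *\<^sub>R axis i 1" for x :: "real^'n"
  define t where "t z = (of_int (snd e') - of_int_vec (fst e') \<bullet> z) / of_int (fst e' i)" for z :: "real^'n"
  define lift where "lift z = z + t z *\<^sub>R axis i 1" for z
  have solves_lift: "solves_real e' (lift z)" for z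
    using pivot by (simp add: lift_def t_def solves_real_def inner_add_right inner_of_int_vec_axis)
  have "bij_betw drop (real_solutions J (insert e' E)) (real_solutions (insert i J) (eliminate i e' ` E))"
  proof (rule bij_betw_byWitness[where f' = lift])
    show "\<forall>x\<in>real_solutions J (insert e' E). lift (drop x) = x"
      using pivot by (simp add: real_solutions_def solves_real_def drop_def lift_def t_def
          inner_diff_right inner_of_int_vec_axis)
    show "\<forall>z\<in>real_solutions (insert i J) (eliminate i e' ` E). drop (lift z) = z"
      by (auto simp: real_solutions_def drop_def lift_def)
    show "drop ` real_solutions J (insert e' E) \<subseteq> real_solutions (insert i J) (eliminate i e' ` E)"
      using drop_pivot_mem_real_solutions[OF pivot] unfolding drop_def by blast
    show "lift ` real_solutions (insert i J) (eliminate i e' ` E) \<subseteq> real_solutions J (insert e' E)"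
      using lift_pivot_mem_real_solutions[OF pivot \<open>i \<notin> J\<close>] solves_lift unfolding lift_def by blast
  qed
  then show ?thesis
    by (simp add: drop_def[abs_def])
qed

lemma solves_mod_upd:
  assumes "fst e i = 0"
  shows "solves_mod p e (y(i := t)) \<longleftrightarrow> solves_mod p e y"
  using assms by (simp add: solves_mod_def int_form_upd)

lemma linear_congruence_solution:
  fixes a c s u :: int
  assumes "[a * u = 1] (mod int p)" and "p > 0"
  shows "nat ((u * (c - s)) mod int p) < p"
    and "[s + a * int (nat ((u * (c - s)) mod int p)) = c] (mod int p)"
proof -
  let ?t = "nat ((u * (c - s)) mod int p)"
  show "?t < p"
    using assms(2) by (simp add: nat_less_iff)
  have "[int ?t = u * (c - s)] (mod int p)"
    using assms(2) by (simp add: cong_def)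
  then have "[s + a * int ?t = s + (a * u) * (c - s)] (mod int p)"
    by (metis cong_add cong_refl cong_scalar_left mult.assoc)
  also have "[s + (a * u) * (c - s) = s + 1 * (c - s)] (mod int p)"
    using assms(1) by (intro cong_add cong_mult cong_refl)
  finally show "[s + a * int ?t = c] (mod int p)"
    by simp
qed

lemma linear_congruence_unique:
  fixes a c s :: int
  assumes "coprime a (int p)"
    and "[s + a * int t = c] (mod int p)" and "[s + a * int t' = c] (mod int p)"
    and "t < p" and "t' < p"
  shows "t = t'"
proof -
  have "[s + a * int t = s + a * int t'] (mod int p)"
    using assms(2,3) by (metis cong_sym cong_trans)
  then have "[int t = int t'] (mod int p)"
    using assms(1) by (simp add: cong_add_lcancel cong_mult_lcancel)
  then show ?thesis
    using assms(4,5) by (simp add: cong_int_iff cong_less_modulus_unique_nat)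
qed

lemma drop_pivot_mem_mod_solutions:
  assumes "coprime (fst e' i) (int p)" and "y \<in> mod_solutions p J (insert e' E)"
  shows "y(i := 0) \<in> mod_solutions p (insert i J) (eliminate i e' ` E)"
proof -
  have "solves_mod p (eliminate i e' e) (y(i := 0))" if "e \<in> E" for e
    using assms that
    by (simp add: mod_solutions_def solves_mod_upd eliminate_pivot solves_mod_eliminate_iff)
  moreover have "y(i := 0) \<in> grid p"
    using assms(2) by (auto simp: mod_solutions_def grid_def)
  ultimately show ?thesis
    using assms(2) unfolding mod_solutions_def by auto
qed

lemma lift_pivot_mem_mod_solutions:
  assumes "coprime (fst e' i) (int p)" and "i \<notin> J"
    and z: "z \<in> mod_solutions p (insert i J) (eliminate i e' ` E)"
    and "t < p" and lift: "solves_mod p e' (z(i := t))"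
  shows "z(i := t) \<in> mod_solutions p J (insert e' E)"
proof -
  have "solves_mod p e (z(i := t))" if "e \<in> E" for e
  proof -
    have "solves_mod p (eliminate i e' e) (z(i := t))"
      using z that by (simp add: mod_solutions_def solves_mod_upd eliminate_pivot)
    then show ?thesis
      using assms(1) lift solves_mod_eliminate_iff by blast
  qed
  then show ?thesis
    using assms(2,4) z lift by (auto simp: mod_solutions_def grid_def)
qed

lemma bij_betw_mod_solutions_eliminate:
  fixes E :: "(('n::finite \<Rightarrow> int) \<times> int) set"
  assumes pivot: "coprime (fst e' i) (int p)" and "p > 0" and "i \<notin> J"
  shows "bij_betw (\<lambda>y. y(i := 0)) (mod_solutions p J (insert e' E))
           (mod_solutions p (insert i J) (eliminate i e' ` E))"
proof -
  obtain u where u: "[fst e' i * u = 1] (mod int p)"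
    using cong_solve_coprime_int[OF pivot] by blast
  \<comment> \<open>the value of the \<open>i\<close>-th coordinate in \<open>{0..<p}\<close> that solves the pivot equation\<close>
  define t where "t z = nat ((u * (snd e' - int_form (fst e') z)) mod int p)" for z :: "'n \<Rightarrow> nat"
  have t_lt: "t z < p" and t_solves: "[int_form (fst e') z + fst e' i * int (t z) = snd e'] (mod int p)" for z
    using linear_congruence_solution[OF u \<open>p > 0\<close>] by (simp_all add: t_def)
  show ?thesis
  proof (rule bij_betw_byWitness[where f' = "\<lambda>z. z(i := t z)"])
    show "\<forall>y\<in>mod_solutions p J (insert e' E). (y(i := 0))(i := t (y(i := 0))) = y"
    proof
      fix y assume y: "y \<in> mod_solutions p J (insert e' E)"
      have "[int_form (fst e') (y(i := 0)) + fst e' i * int (y i) = snd e'] (mod int p)"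
        using y by (simp add: mod_solutions_def solves_mod_def int_form_upd)
      then have "t (y(i := 0)) = y i"
        using y pivot t_solves t_lt linear_congruence_unique by (fastforce simp: mod_solutions_def grid_def)
      then show "(y(i := 0))(i := t (y(i := 0))) = y"
        by simp
    qed
    show "\<forall>z\<in>mod_solutions p (insert i J) (eliminate i e' ` E). (z(i := t z))(i := 0) = z"
      by (auto simp: mod_solutions_def)
    show "(\<lambda>y. y(i := 0)) ` mod_solutions p J (insert e' E)
        \<subseteq> mod_solutions p (insert i J) (eliminate i e' ` E)"
      using drop_pivot_mem_mod_solutions[OF pivot] by blast
    have "solves_mod p e' (z(i := t z))" if "z i = 0" for z
      using that t_solves by (simp add: solves_mod_def int_form_upd)
    then show "(\<lambda>z. z(i := t z)) ` mod_solutions p (insert i J) (eliminate i e' ` E)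
        \<subseteq> mod_solutions p J (insert e' E)"
      using lift_pivot_mem_mod_solutions[OF pivot \<open>i \<notin> J\<close> _ t_lt] by (auto simp: mod_solutions_def)
  qed
qed

lemma real_solutions_homogeneous:
  "real_solutions J (homogeneous E) = {x. (\<forall>j\<in>J. x $ j = 0) \<and> (\<forall>e\<in>E. of_int_vec (fst e) \<bullet> x = 0)}"
  by (auto simp: real_solutions_def homogeneous_def solves_real_def)

lemma subspace_real_solutions_homogeneous: "subspace (real_solutions J (homogeneous E))"
  unfolding subspace_def real_solutions_homogeneous by (simp add: inner_add_right)

lemma homogeneous_insert: "homogeneous (insert e' E) = insert (fst e', 0) (homogeneous E)"
  by (simp add: homogeneous_def)

lemma homogeneous_eliminate: "homogeneous (eliminate i e' ` E) = eliminate i (fst e', 0) ` homogeneous E"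
  unfolding homogeneous_def image_image
  by (intro image_cong refl) (simp add: eliminate_def split: prod.split)

lemma dim_real_solutions_eliminate:
  fixes E :: "(('n::finite \<Rightarrow> int) \<times> int) set"
  assumes "fst e' i \<noteq> 0" and "i \<notin> J"
  shows "dim (real_solutions J (homogeneous (insert e' E)))
       = dim (real_solutions (insert i J) (homogeneous (eliminate i e' ` E)))"
proof -
  let ?S = "real_solutions J (homogeneous (insert e' E))"
  let ?drop = "\<lambda>x::real^'n. x - x $ i *\<^sub>R axis i 1"
  have bij: "bij_betw ?drop ?S (real_solutions (insert i J) (homogeneous (eliminate i e' ` E)))"
    unfolding homogeneous_insert homogeneous_eliminate
    using bij_betw_real_solutions_eliminate[of "(fst e', 0)" i J] assms by simp
  have span_S: "span ?S = ?S"
    by (simp add: subspace_real_solutions_homogeneous)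
  have "linear ?drop"
    by (intro linearI) (simp_all add: algebra_simps)
  moreover have "inj_on ?drop (span ?S)"
    unfolding span_S using bij by (simp add: bij_betw_def)
  ultimately have "dim (?drop ` ?S) = dim ?S"
    by (rule dim_image_eq)
  then show ?thesis
    using bij by (simp add: bij_betw_def)
qed

lemma card_mod_solutions_empty:
  fixes J :: "'n::finite set"
  assumes "p > 0"
  shows "card (mod_solutions p J {}) = p ^ card (- J)"
proof -
  have "mod_solutions p J {} = (\<Pi>\<^sub>E i\<in>UNIV. if i \<in> J then {0} else {..<p})"
    using assms by (auto simp: mod_solutions_def grid_def PiE_def Pi_def extensional_def split: if_splits)
  then have "card (mod_solutions p J {}) = (\<Prod>i\<in>UNIV. card (if i \<in> J then {0} else {..<p}))"
    by (simp add: card_PiE)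
  also have "\<dots> = (\<Prod>i\<in>UNIV. if i \<in> J then 1 else p)"
    by (intro prod.cong) auto
  finally show ?thesis
    by (simp add: prod.If_cases Compl_eq_Diff_UNIV)
qed

lemma dim_real_solutions_empty:
  fixes J :: "'n::finite set"
  shows "dim (real_solutions J {}) = card (- J)"
proof -
  have "real_solutions J {} = {x. \<forall>i. i \<notin> - J \<longrightarrow> x $ i = 0}"
    by (auto simp: real_solutions_def)
  then show ?thesis
    using dim_substandard_cart[of "- J", where 'a = real] by (simp add: dim_vec_eq)
qed

definition solution_count_law :: "'n::finite set \<Rightarrow> (('n \<Rightarrow> int) \<times> int) set \<Rightarrow> bool" where
  "solution_count_law J E \<longleftrightarrow> (\<forall>\<^sub>F p in sequentially. prime p \<longrightarrow> card (mod_solutions p J E) =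
     (if real_solutions J E = {} then 0 else p ^ dim (real_solutions J (homogeneous E))))"

lemma solution_count_law_empty: "solution_count_law J {}"
proof -
  have "0 \<in> real_solutions J {}"
    by (simp add: real_solutions_def)
  then show ?thesis
    by (auto simp: solution_count_law_def homogeneous_def card_mod_solutions_empty
        dim_real_solutions_empty prime_gt_0_nat)
qed

lemma card_mod_solutions_eliminate:
  fixes E :: "(('n::finite \<Rightarrow> int) \<times> int) set"
  assumes "prime p" and "int p > \<bar>fst e' i\<bar>" and "fst e' i \<noteq> 0" and "i \<notin> J"
  shows "card (mod_solutions p J (insert e' E)) = card (mod_solutions p (insert i J) (eliminate i e' ` E))"
proof -
  have "\<not> int p dvd fst e' i"
    using assms(2,3) by (auto dest: dvd_imp_le_int)
  then have "coprime (fst e' i) (int p)"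
    using assms(1) by (simp add: coprime_commute prime_imp_coprime)
  then show ?thesis
    using bij_betw_mod_solutions_eliminate assms(1,4) bij_betw_same_card prime_gt_0_nat by blast
qed

lemma solution_count_law_eliminate:
  fixes E :: "(('n::finite \<Rightarrow> int) \<times> int) set"
  assumes pivot: "fst e' i \<noteq> 0" and "i \<notin> J"
    and law: "solution_count_law (insert i J) (eliminate i e' ` E)"
  shows "solution_count_law J (insert e' E)"
proof -
  let ?E2 = "eliminate i e' ` E"
  have empty_iff: "real_solutions J (insert e' E) = {} \<longleftrightarrow> real_solutions (insert i J) ?E2 = {}"
    using bij_betw_real_solutions_eliminate[OF assms(1,2)] by (auto simp: bij_betw_def)
  have "\<forall>\<^sub>F p in sequentially. int p > \<bar>fst e' i\<bar>"
    by (rule eventually_sequentiallyI[of "nat \<bar>fst e' i\<bar> + 1"]) auto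
  with law show ?thesis
    unfolding solution_count_law_def
  proof eventually_elim
    case (elim p)
    then show ?case
      using card_mod_solutions_eliminate[OF _ _ assms(1,2)] empty_iff
        dim_real_solutions_eliminate[OF assms(1,2)] by simp
  qed
qed

lemma solves_trivial_equation:
  assumes "fst e = (\<lambda>_. 0)"
  shows "solves_real e x \<longleftrightarrow> snd e = 0"
    and "solves_mod p e y \<longleftrightarrow> int p dvd snd e"
proof -
  have "of_int_vec (fst e) = 0"
    using assms by (simp add: of_int_vec_def vec_eq_iff)
  then show "solves_real e x \<longleftrightarrow> snd e = 0"
    by (auto simp: solves_real_def)
  show "solves_mod p e y \<longleftrightarrow> int p dvd snd e"
    using assms by (simp add: solves_mod_def int_form_def cong_sym_eq[of 0] cong_0_iff)
qed

lemma solution_count_law_trivial_equation: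
  assumes trivial: "fst e' = (\<lambda>_. 0)" and law: "solution_count_law J E"
  shows "solution_count_law J (insert e' E)"
proof (cases "snd e' = 0")
  case True
  then have same: "real_solutions J (insert e' E) = real_solutions J E"
    "mod_solutions p J (insert e' E) = mod_solutions p J E"
    "real_solutions J (homogeneous (insert e' E)) = real_solutions J (homogeneous E)" for p
    using trivial by (auto simp: real_solutions_def mod_solutions_def homogeneous_insert
        solves_trivial_equation)
  show ?thesis
    using law unfolding solution_count_law_def same .
next
  case False
  then have "real_solutions J (insert e' E) = {}"
    using trivial by (auto simp: real_solutions_def solves_trivial_equation)
  moreover have "mod_solutions p J (insert e' E) = {}" if "int p > \<bar>snd e'\<bar>" for p
    using trivial False that by (auto simp: mod_solutions_def solves_trivial_equation dest: dvd_imp_le_int)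
  ultimately show ?thesis
    unfolding solution_count_law_def
    by (intro eventually_sequentiallyI[of "nat \<bar>snd e'\<bar> + 1"]) auto
qed

theorem solution_count_law:
  fixes E :: "(('n::finite \<Rightarrow> int) \<times> int) set"
  assumes "finite E" and "\<forall>e\<in>E. \<forall>j\<in>J. fst e j = 0"
  shows "solution_count_law J E"
  using assms
proof (induction "card E" arbitrary: E J rule: less_induct)
  case less
  show ?case
  proof (cases "E = {}")
    case True
    then show ?thesis
      by (simp add: solution_count_law_empty)
  next
    case False
    then obtain e' E' where E: "E = insert e' E'" and "e' \<notin> E'"
      by (metis Set.set_insert ex_in_conv)
    then have "finite E'" and card_less: "card E' < card E"
      using less.prems(1) by auto
    show ?thesis
    proof (cases "\<exists>i. fst e' i \<noteq> 0")
      case True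
      then obtain i where pivot: "fst e' i \<noteq> 0"
        by blast
      then have "i \<notin> J"
        using less.prems(2) E by auto
      have "card (eliminate i e' ` E') < card E"
        using card_image_le[OF \<open>finite E'\<close>] card_less by (meson le_less_trans)
      moreover have "\<forall>e\<in>eliminate i e' ` E'. \<forall>j\<in>insert i J. fst e j = 0"
        using less.prems(2) E by (auto simp: eliminate_def split: prod.split)
      ultimately show ?thesis
        using less.hyps \<open>finite E'\<close> solution_count_law_eliminate[OF pivot \<open>i \<notin> J\<close>] E by blast
    next
      case False
      then show ?thesis
        using less E card_less \<open>finite E'\<close> solution_count_law_trivial_equation[of e' J E'] by auto
    qed
  qed
qed

lemma dim_real_solutions_homogeneous:
  fixes E :: "(('n::finite \<Rightarrow> int) \<times> int) set"
  shows "dim (real_solutions {} (homogeneous E)) + dim ((\<lambda>e. of_int_vec (fst e)) ` E) = CARD('n)"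
proof -
  let ?V = "(\<lambda>e. of_int_vec (fst e)) ` E"
  have "real_solutions {} (homogeneous E) = {y \<in> UNIV. \<forall>x\<in>span ?V. orthogonal x y}"
  proof (intro set_eqI iffI)
    fix y assume "y \<in> real_solutions {} (homogeneous E)"
    then have "orthogonal y x" if "x \<in> ?V" for x
      using that by (auto simp: real_solutions_homogeneous orthogonal_def inner_commute)
    then show "y \<in> {y \<in> UNIV. \<forall>x\<in>span ?V. orthogonal x y}"
      using orthogonal_to_span orthogonal_commute by blast
  qed (auto simp: real_solutions_homogeneous orthogonal_def span_base)
  moreover have "dim {y \<in> UNIV. \<forall>x\<in>span ?V. orthogonal x y} + dim (span ?V) = dim (UNIV :: (real^'n) set)"
    by (rule dim_subspace_orthogonal_to_vectors) auto
  ultimately show ?thesis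
    by (simp add: dim_span)
qed

section \<open>The arrangement and its reduction modulo \<open>q\<close>\<close>

text \<open>The pair \<open>(1, 0)\<close> supplies the hyperplanes \<open>x_i = x_j\<close>.\<close>

definition arr_index :: "(nat \<times> nat) list \<Rightarrow> ('n \<times> 'n \<times> nat \<times> nat) set" where
  "arr_index ps = {(i, j, a, b). i \<noteq> j \<and> (a, b) \<in> insert (1, 0) (set ps)}"

definition hyperplane_of :: "'n \<times> 'n \<times> nat \<times> nat \<Rightarrow> (real^'n::finite) set" where
  "hyperplane_of = (\<lambda>(i, j, a, b). {x. x $ i = real a * x $ j + real b})"

definition equation_of :: "'n \<times> 'n \<times> nat \<times> nat \<Rightarrow> ('n::finite \<Rightarrow> int) \<times> int" where
  "equation_of = (\<lambda>(i, j, a, b). (\<lambda>k. of_bool (k = i) - int a * of_bool (k = j), int b))"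

lemma finite_arr_index: "finite (arr_index ps :: ('n::finite \<times> 'n \<times> nat \<times> nat) set)"
proof -
  have "arr_index ps \<subseteq> (UNIV :: 'n set) \<times> UNIV \<times> insert (1, 0) (set ps)"
    by (auto simp: arr_index_def)
  then show ?thesis
    by (rule finite_subset) auto
qed

lemma arr_eq_image: "arr ps = hyperplane_of ` arr_index ps"
proof (intro set_eqI iffI)
  fix H :: "(real^'n) set"
  assume "H \<in> arr ps"
  then obtain i j a b where "i \<noteq> j" "(a, b) \<in> insert (1, 0) (set ps)"
    and "H = {x. x $ i = real a * x $ j + real b}"
    unfolding arr_def by fastforce
  then show "H \<in> hyperplane_of ` arr_index ps"
    unfolding arr_index_def hyperplane_of_def by (intro image_eqI[of _ _ "(i, j, a, b)"]) auto
next
  fix H :: "(real^'n) set"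
  assume "H \<in> hyperplane_of ` arr_index ps"
  then obtain i j a b where ij: "i \<noteq> j" and ab: "(a, b) \<in> insert (1, 0) (set ps)"
    and H: "H = {x. x $ i = real a * x $ j + real b}"
    by (auto simp: arr_index_def hyperplane_of_def)
  show "H \<in> arr ps"
  proof (cases "(a, b) = (1, 0)")
    case True
    then show ?thesis
      using ij H unfolding arr_def by auto
  next
    case False
    then show ?thesis
      using ij ab H unfolding arr_def by blast
  qed
qed

lemma finite_arr: "finite (arr ps :: (real^'n::finite) set set)"
  unfolding arr_eq_image by (intro finite_imageI finite_arr_index)

lemma solves_real_equation_of:
  assumes "i \<noteq> j"
  shows "solves_real (equation_of (i, j, a, b)) x \<longleftrightarrow> x $ i = real a * x $ j + real b"
proof -
  have "of_int_vec (fst (equation_of (i, j, a, b))) = axis i 1 - real a *\<^sub>R axis j 1"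
    by (simp add: equation_of_def of_int_vec_def vec_eq_iff axis_def)
  then show ?thesis
    using assms by (auto simp: solves_real_def equation_of_def inner_diff_left inner_axis')
qed

lemma solves_mod_equation_of:
  assumes "i \<noteq> j"
  shows "solves_mod q (equation_of (i, j, a, b)) y \<longleftrightarrow> [y i = a * y j + b] (mod q)"
proof -
  have "int_form (fst (equation_of (i, j, a, b))) y = int (y i) - int a * int (y j)"
    using assms by (simp add: equation_of_def int_form_def sum_subtractf of_bool_def if_distrib
        if_distribR sum.If_cases)
  moreover have "snd (equation_of (i, j, a, b)) = int b"
    by (simp add: equation_of_def)
  ultimately have "solves_mod q (equation_of (i, j, a, b)) y
      \<longleftrightarrow> [int (y i) - int a * int (y j) = int b] (mod int q)"
    by (simp add: solves_mod_def)
  also have "\<dots> \<longleftrightarrow> [int (y i) = int (a * y j + b)] (mod int q)"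
    by (simp add: cong_iff_dvd_diff algebra_simps)
  finally show ?thesis
    by (simp only: cong_int_iff)
qed

lemma hyperplane_of_eq:
  assumes "r \<in> arr_index ps"
  shows "hyperplane_of r = {x. solves_real (equation_of r) x}"
  using assms by (auto simp: arr_index_def hyperplane_of_def solves_real_equation_of)

lemma equation_of_pivot:
  assumes "r \<in> arr_index ps"
  obtains i where "fst (equation_of r) i = 1"
proof -
  obtain i j a b where "r = (i, j, a, b)" and "i \<noteq> j"
    using assms by (auto simp: arr_index_def)
  then show thesis
    by (intro that[of i]) (simp add: equation_of_def)
qed

lemma of_int_vec_equation_of_nonzero:
  assumes "r \<in> arr_index ps"
  shows "of_int_vec (fst (equation_of r)) \<noteq> 0"
proof -
  obtain i where "fst (equation_of r) i = 1"
    using equation_of_pivot[OF assms] by blast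
  then show ?thesis
    by (auto simp: of_int_vec_def vec_eq_iff intro!: exI[of _ i])
qed

lemma solves_mod_equation_of_invariant:
  assumes r: "r \<in> arr_index ps" and r': "r' \<in> arr_index ps"
    and H: "hyperplane_of r = hyperplane_of r'" and sat: "solves_mod q (equation_of r) y"
  shows "solves_mod q (equation_of r') y"
proof -
  obtain w c w' c' where wc: "equation_of r = (w, c)" and wc': "equation_of r' = (w', c')"
    by fastforce
  obtain i where wi: "w i = 1"
    using equation_of_pivot[OF r] wc by auto
  have "of_int_vec w \<noteq> 0"
    using of_int_vec_equation_of_nonzero[OF r] wc by simp
  moreover have "{x. of_int_vec w \<bullet> x = of_int c} = {x. of_int_vec w' \<bullet> x = of_int c'}"
    using H hyperplane_of_eq[OF r] hyperplane_of_eq[OF r'] wc wc' by (simp add: solves_real_def)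
  ultimately obtain l where l: "of_int_vec w' = l *\<^sub>R of_int_vec w" "of_int c' = l * of_int c"
    by (rule hyperplane_eq_imp_proportional)
  \<comment> \<open>the coefficient \<open>1\<close> of the pivot makes the factor an integer\<close>
  have l_int: "l = of_int (w' i)"
    using arg_cong[OF l(1), of "\<lambda>v. v $ i"] wi by (simp add: of_int_vec_def)
  have w': "w' = (\<lambda>k. w' i * w k)"
  proof
    fix k
    show "w' k = w' i * w k"
      using arg_cong[OF l(1), of "\<lambda>v. v $ k"] l_int by (simp add: of_int_vec_def flip: of_int_mult)
  qed
  have c': "c' = w' i * c"
    using l(2) l_int by (simp flip: of_int_mult)
  have "int_form w' y = w' i * int_form w y"
    by (subst w') (simp add: int_form_def sum_distrib_left mult.assoc)
  then show ?thesis
    using sat wc wc' c' by (simp add: solves_mod_def cong_scalar_left)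
qed

text \<open>A hyperplane can have several indices, e.g. \<open>x_i = x_j\<close> has \<open>(i, j, 1, 0)\<close> and
  \<open>(j, i, 1, 0)\<close>. Their equations are integer multiples of each other, so any one of them
  determines \<open>mod_points\<close> (lemma \<open>mem_mod_points_iff\<close>).\<close>

definition mod_points :: "nat \<Rightarrow> (nat \<times> nat) list \<Rightarrow> (real^'n::finite) set \<Rightarrow> ('n \<Rightarrow> nat) set" where
  "mod_points q ps H =
     {y \<in> grid q. \<forall>r\<in>arr_index ps. hyperplane_of r = H \<longrightarrow> solves_mod q (equation_of r) y}"

definition equations_of :: "(nat \<times> nat) list \<Rightarrow> (real^'n::finite) set set \<Rightarrow> (('n \<Rightarrow> int) \<times> int) set" where
  "equations_of ps B = equation_of ` {r \<in> arr_index ps. hyperplane_of r \<in> B}"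

lemma finite_equations_of: "finite (equations_of ps B :: (('n::finite \<Rightarrow> int) \<times> int) set)"
  unfolding equations_of_def by (intro finite_imageI finite_subset[OF _ finite_arr_index]) auto

lemma mem_mod_points_iff:
  assumes "r \<in> arr_index ps" and "y \<in> grid q"
  shows "y \<in> mod_points q ps (hyperplane_of r) \<longleftrightarrow> solves_mod q (equation_of r) y"
  using assms solves_mod_equation_of_invariant[of r ps] by (auto simp: mod_points_def)

lemma grid_Inter_mod_points:
  "grid q \<inter> \<Inter>(mod_points q ps ` B) = mod_solutions q {} (equations_of ps B)"
  by (auto simp: mod_points_def mod_solutions_def equations_of_def)

lemma Inter_eq_real_solutions:
  assumes "B \<subseteq> arr ps"
  shows "\<Inter>B = real_solutions {} (equations_of ps B)"
proof -
  have "\<Inter>B = (\<Inter>r\<in>{r \<in> arr_index ps. hyperplane_of r \<in> B}. hyperplane_of r)"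
    using assms unfolding arr_eq_image by blast
  also have "\<dots> = real_solutions {} (equations_of ps B)"
    by (auto simp: real_solutions_def equations_of_def hyperplane_of_eq)
  finally show ?thesis .
qed

lemma is_normal_hyperplane_of:
  assumes r: "r \<in> arr_index ps"
  shows "is_normal (hyperplane_of r) (of_int_vec (fst (equation_of r)))"
proof -
  have "of_int_vec (fst (equation_of r)) \<noteq> 0"
    by (rule of_int_vec_equation_of_nonzero[OF r])
  then show ?thesis
    unfolding is_normal_def using hyperplane_of_eq[OF r]
    by (intro conjI exI[of _ "of_int (snd (equation_of r))"]) (simp_all add: solves_real_def)
qed

lemma normal_in_span_equations_of:
  assumes "B \<subseteq> arr ps" and H: "H \<in> B" and w: "is_normal H w"
  shows "w \<in> span ((\<lambda>e. of_int_vec (fst e)) ` equations_of ps B)"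
proof -
  obtain c where Hw: "H = {x. w \<bullet> x = c}"
    using w by (auto simp: is_normal_def)
  have "H \<in> hyperplane_of ` arr_index ps"
    using H assms(1) arr_eq_image by blast
  then obtain r where r: "r \<in> arr_index ps" and rH: "hyperplane_of r = H"
    by blast
  let ?u = "of_int_vec (fst (equation_of r))"
  have "?u \<noteq> 0"
    using is_normal_hyperplane_of[OF r] by (simp add: is_normal_def)
  moreover have "{x. ?u \<bullet> x = of_int (snd (equation_of r))} = {x. w \<bullet> x = c}"
    using hyperplane_of_eq[OF r] rH Hw by (simp add: solves_real_def)
  ultimately obtain l where l: "w = l *\<^sub>R ?u"
    by (rule hyperplane_eq_imp_proportional)
  have "equation_of r \<in> equations_of ps B"
    using r H rH by (auto simp: equations_of_def)
  then have "?u \<in> span ((\<lambda>e. of_int_vec (fst e)) ` equations_of ps B)"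
    by (intro span_base imageI)
  then show ?thesis
    unfolding l by (rule span_scale)
qed

lemma arr_rank_eq_dim:
  assumes "B \<subseteq> arr ps"
  shows "arr_rank B = dim ((\<lambda>e. of_int_vec (fst e)) ` equations_of ps B)"
proof -
  let ?V = "(\<lambda>e. of_int_vec (fst e)) ` equations_of ps B"
  let ?N = "{w. \<exists>H\<in>B. is_normal H w}"
  have VN: "?V \<subseteq> ?N"
  proof
    fix v assume "v \<in> ?V"
    then obtain r where "r \<in> arr_index ps" "hyperplane_of r \<in> B" "v = of_int_vec (fst (equation_of r))"
      by (auto simp: equations_of_def)
    then show "v \<in> ?N"
      using is_normal_hyperplane_of by blast
  qed
  have NV: "?N \<subseteq> span ?V"
    using normal_in_span_equations_of[OF assms] by blast
  have same_span: "span ?N = span ?V"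
    using span_eq[of ?N ?V] NV subset_trans[OF VN span_superset] by blast
  have "arr_rank B = dim (span ?N)"
    by (simp only: arr_rank_def dim_span)
  also have "\<dots> = dim ?V"
    by (simp only: same_span dim_span)
  finally show ?thesis .
qed

lemma card_grid_Inter_mod_points_eventually:
  fixes B :: "(real^'n::finite) set set"
  assumes "B \<subseteq> arr ps"
  shows "\<forall>\<^sub>F q in sequentially. prime q \<longrightarrow> card (grid q \<inter> \<Inter>(mod_points q ps ` B)) =
           (if \<Inter>B = {} then 0 else q ^ (CARD('n) - arr_rank B))"
proof -
  have "solution_count_law {} (equations_of ps B)"
    by (rule solution_count_law[OF finite_equations_of]) simp
  moreover have "dim (real_solutions {} (homogeneous (equations_of ps B))) = CARD('n) - arr_rank B"
    using dim_real_solutions_homogeneous[of "equations_of ps B"] arr_rank_eq_dim[OF assms] by simp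
  ultimately show ?thesis
    by (simp only: solution_count_law_def grid_Inter_mod_points Inter_eq_real_solutions[OF assms])
qed

section \<open>Independent sets and the characteristic polynomial\<close>

lemma grid_diff_mod_points:
  "grid q - (\<Union>H\<in>arr ps. mod_points q ps H) =
     {y \<in> grid q. \<forall>r\<in>arr_index ps. \<not> solves_mod q (equation_of r) y}"
  by (auto simp: arr_eq_image mem_mod_points_iff)

lemma avoiding_tuple_iff_bij_indep_set:
  fixes y :: "'n::finite \<Rightarrow> nat"
  assumes "y \<in> grid q"
  shows "(\<forall>r\<in>arr_index ps. \<not> solves_mod q (equation_of r) y) \<longleftrightarrow>
         (\<exists>S\<in>indep_sets ps q CARD('n). bij_betw y UNIV S)"
proof
  assume avoid: "\<forall>r\<in>arr_index ps. \<not> solves_mod q (equation_of r) y"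
  have no_rel: "\<not> [y i = a * y j + b] (mod q)"
    if "i \<noteq> j" and "(a, b) \<in> insert (1, 0) (set ps)" for i j a b
    using avoid[rule_format, of "(i, j, a, b)"] that by (simp add: arr_index_def solves_mod_equation_of)
  have "inj y"
  proof (rule injI, rule ccontr)
    fix i j assume "y i = y j" and "i \<noteq> j"
    then show False
      using no_rel[of i j 1 0] by simp
  qed
  moreover have "\<not> adj ps q u v" if uv_range: "u \<in> range y" "v \<in> range y" for u v
  proof
    assume uv: "adj ps q u v"
    obtain i j where "u = y i" and "v = y j"
      using uv_range by blast
    moreover have "i \<noteq> j"
      using uv \<open>u = y i\<close> \<open>v = y j\<close> by (auto simp: adj_def)
    ultimately show False
      using uv no_rel by (auto simp: adj_def)
  qed
  ultimately have "range y \<in> indep_sets ps q CARD('n)"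
    using assms by (auto simp: indep_sets_def grid_def card_image)
  then show "\<exists>S\<in>indep_sets ps q CARD('n). bij_betw y UNIV S"
    using \<open>inj y\<close> by (auto simp: bij_betw_def)
next
  assume "\<exists>S\<in>indep_sets ps q CARD('n). bij_betw y UNIV S"
  then obtain S where S: "S \<in> indep_sets ps q CARD('n)" and "inj y" and "range y = S"
    by (auto simp: bij_betw_def)
  show "\<forall>r\<in>arr_index ps. \<not> solves_mod q (equation_of r) y"
  proof (intro ballI notI)
    fix r assume r: "r \<in> arr_index ps" and sol: "solves_mod q (equation_of r) y"
    obtain i j a b where "r = (i, j, a, b)" and "i \<noteq> j" and ab: "(a, b) \<in> insert (1, 0) (set ps)"
      using r by (auto simp: arr_index_def)
    then have rel: "[y i = a * y j + b] (mod q)"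
      using sol by (simp add: solves_mod_equation_of)
    have "y i \<noteq> y j"
      using \<open>inj y\<close> \<open>i \<noteq> j\<close> by (auto dest: injD)
    show False
    proof (cases "(a, b) = (1, 0)")
      case True
      then show False
        using rel assms \<open>y i \<noteq> y j\<close> by (auto simp: grid_def dest: cong_less_modulus_unique_nat)
    next
      case False
      then have "adj ps q (y i) (y j)"
        using ab rel \<open>y i \<noteq> y j\<close> by (auto simp: adj_def)
      then show False
        using S \<open>range y = S\<close> by (auto simp: indep_sets_def)
    qed
  qed
qed

lemma card_grid_diff_mod_points:
  "card (grid q - (\<Union>H\<in>arr ps. mod_points q ps H) :: ('n::finite \<Rightarrow> nat) set)
     = card (indep_sets ps q CARD('n)) * fact CARD('n)"
proof -
  let ?I = "indep_sets ps q CARD('n)"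
  let ?F = "\<lambda>S. {y :: 'n \<Rightarrow> nat. bij_betw y UNIV S}"
  have F_grid: "?F S \<subseteq> grid q" if "S \<in> ?I" for S
    using that by (auto simp: grid_def indep_sets_def bij_betw_def image_subset_iff)
  have "grid q - (\<Union>H\<in>arr ps. mod_points q ps H) = (\<Union>S\<in>?I. ?F S)"
  proof (intro set_eqI)
    fix y :: "'n \<Rightarrow> nat"
    show "y \<in> grid q - (\<Union>H\<in>arr ps. mod_points q ps H) \<longleftrightarrow> y \<in> (\<Union>S\<in>?I. ?F S)"
    proof (cases "y \<in> grid q")
      case True
      then show ?thesis
        unfolding grid_diff_mod_points using avoiding_tuple_iff_bij_indep_set[OF True] by blast
    next
      case False
      then show ?thesis
        using F_grid by blast
    qed
  qed
  moreover have "finite ?I"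
    by (rule finite_subset[of _ "Pow {0..<q}"]) (auto simp: indep_sets_def)
  moreover have "finite (?F S)" and "card (?F S) = fact CARD('n)" if S: "S \<in> ?I" for S
  proof -
    show "finite (?F S)"
      using F_grid[OF S] finite_grid by (rule finite_subset)
    have "finite S" and "card S = CARD('n)"
      using S finite_subset[of S "{0..<q}"] by (auto simp: indep_sets_def)
    then show "card (?F S) = fact CARD('n)"
      by (rule card_bij_betw_UNIV)
  qed
  moreover have "?F S \<inter> ?F T = {}" if "S \<noteq> T" for S T
    using that by (auto simp: bij_betw_def)
  ultimately show ?thesis
    by (simp add: card_UN_disjoint)
qed

lemma char_poly_eq_sum_Pow:
  fixes A :: "(real^'n::finite) set set"
  assumes "finite A"
  shows "char_poly A t =
    (\<Sum>B\<in>Pow A. if \<Inter>B \<noteq> {} then (-1) ^ card B * t ^ (CARD('n) - arr_rank B) else 0)"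
proof -
  have "{B. B \<subseteq> A \<and> \<Inter>B \<noteq> {}} = {B \<in> Pow A. \<Inter>B \<noteq> {}}"
    by blast
  then have "char_poly A t = (\<Sum>B\<in>{B \<in> Pow A. \<Inter>B \<noteq> {}}. (-1) ^ card B * t ^ (CARD('n) - arr_rank B))"
    by (simp only: char_poly_def)
  also have "\<dots> = (\<Sum>B\<in>Pow A. if \<Inter>B \<noteq> {} then (-1) ^ card B * t ^ (CARD('n) - arr_rank B) else 0)"
    using assms by (intro sum.inter_filter) simp
  finally show ?thesis .
qed

theorem proposition1p4:
  fixes ps :: "(nat \<times> nat) list"
  assumes "ps \<noteq> []"
    and "\<forall>p\<in>set ps. p \<noteq> (1, 0)"
  shows "\<exists>q0. \<forall>q. prime q \<and> q \<ge> q0 \<longrightarrow>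
     real (card (indep_sets ps q CARD('n)))
       = char_poly (arr ps :: (real^'n) set set) (real q) / fact CARD('n)"
proof -
  let ?A = "arr ps :: (real^'n) set set"
  let ?C = "\<lambda>q B. card (grid q \<inter> \<Inter>(mod_points q ps ` B) :: ('n \<Rightarrow> nat) set)"
  have "\<forall>B\<in>Pow ?A. \<forall>\<^sub>F q in sequentially.
      prime q \<longrightarrow> ?C q B = (if \<Inter>B = {} then 0 else q ^ (CARD('n) - arr_rank B))"
    using card_grid_Inter_mod_points_eventually by blast
  then have "\<forall>\<^sub>F q in sequentially. \<forall>B\<in>Pow ?A.
      prime q \<longrightarrow> ?C q B = (if \<Inter>B = {} then 0 else q ^ (CARD('n) - arr_rank B))"
    by (intro eventually_ball_finite) (simp_all add: finite_arr)
  then obtain q0 where q0: "\<And>q B. q \<ge> q0 \<Longrightarrow> B \<subseteq> ?A \<Longrightarrow> prime q \<Longrightarrow>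
      ?C q B = (if \<Inter>B = {} then 0 else q ^ (CARD('n) - arr_rank B))"
    by (auto simp: eventually_sequentially)
  show ?thesis
  proof (intro exI[of _ q0] allI impI)
    fix q assume q: "prime q \<and> q \<ge> q0"
    have "real (card (indep_sets ps q CARD('n))) * fact CARD('n)
        = of_int (int (card (grid q - (\<Union>H\<in>?A. mod_points q ps H) :: ('n \<Rightarrow> nat) set)))"
      by (simp add: card_grid_diff_mod_points)
    also have "\<dots> = (\<Sum>B\<in>Pow ?A. (-1) ^ card B * real (?C q B))"
      by (simp add: card_Diff_UN_inclusion_exclusion[OF finite_arr finite_grid] of_int_sum)
    also have "\<dots> = char_poly ?A (real q)"
      using q q0 by (auto simp: char_poly_eq_sum_Pow[OF finite_arr] intro!: sum.cong)
    finally show "real (card (indep_sets ps q CARD('n))) = char_poly ?A (real q) / fact CARD('n)"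
      by (simp add: eq_divide_eq)
  qed
qed

end
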